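(* Let $D\ge 2$, let $W_1,\dots,W_D$ be mutually independent discrete random variables with finite entropy, and let $S$ be a discrete random variable (jointly distributed with $W_1,\dots,W_D$) with $H(S)<\infty$. Then $$\sum_{\substack{d_1,d_2\in[1:D]\\ d_1\neq d_2}} I\big(W_{d_1},W_{d_2};S\big)\ \le\ (2D-1)\,H(S),$$ where the sum runs over ordered pairs $(d_1,d_2)$.
   Context: $I(\cdot;\cdot)$ denotes mutual information and $H(\cdot)$ Shannon entropy; $[1:D]=\{1,\dots,D\}$. *)

theory Defs
  imports "HOL-Probability.Probability"
begin

end

theory Submission
  imports Defs
begin

text \<open>For independent \<open>W\<^sub>a, W\<^sub>v\<close> the chain rule gives \<open>I(W\<^sub>a, W\<^sub>v; S) = I(W\<^sub>a; S) + I(W\<^sub>v; S, W\<^sub>a)\<close>.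
  The key estimate is that for mutually independent \<open>W\<^sub>j\<close>, \<open>j \<in> J\<close>, and \<open>W\<^sub>L\<close> with \<open>L\<close> disjoint
  from \<open>J\<close>, \<open>\<Sum>\<^sub>j\<^sub>\<in>\<^sub>J I(W\<^sub>j; S, W\<^sub>L) \<le> H(S | W\<^sub>L)\<close>: by independence, moving \<open>W\<^sub>j\<close> into the
  conditioning lowers \<open>H(S | \<cdot>)\<close> by exactly \<open>I(W\<^sub>j; S, W\<^sub>L)\<close>, and it can only increase the
  remaining terms. With \<open>L = {a}\<close> the terms with first index \<open>a\<close> add up to at most
  \<open>(D - 2) I(W\<^sub>a; S) + H(S)\<close>, and with \<open>L = {}\<close> one gets \<open>\<Sum>\<^sub>a I(W\<^sub>a; S) \<le> H(S)\<close>; together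
  this even gives the bound \<open>2 (D - 1) H(S)\<close>.\<close>

lemma integrable_count_space_iff_summable_on:
  fixes f :: "'x \<Rightarrow> real"
  shows "integrable (count_space A) f \<longleftrightarrow> f summable_on A"
  using abs_summable_equivalent[of f A] summable_on_iff_abs_summable_on_real[of f A]
  unfolding Infinite_Set_Sum.abs_summable_on_def by simp

lemma count_space_UNIV_pair:
  "count_space (UNIV::'x::countable set) \<Otimes>\<^sub>M count_space (UNIV::'y::countable set) = count_space UNIV"
  by (simp add: pair_measure_countable)

lemma sigma_finite_count_space_UNIV: "sigma_finite_measure (count_space (UNIV::'x::countable set))"
  by (simp add: sigma_finite_measure_count_space_countable)

lemma neg_mult_log_le_product_bound:
  fixes b p px py :: real
  assumes b: "1 < b" and p: "0 \<le> p" "p \<le> px" "p \<le> py"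
  shows "- (p * log b p) \<le> px * py / ln b + p * (- log b px) + p * (- log b py)"
proof (cases "p = 0")
  case True
  then show ?thesis using p b by simp
next
  case False
  then have "0 < p" "0 < px" "0 < py" using p by auto
  have lnb: "0 < ln b" using b by simp
  have "log b (px * py / p) \<le> (px * py / p - 1) / ln b"
    using \<open>0 < p\<close> \<open>0 < px\<close> \<open>0 < py\<close> lnb
    unfolding log_def by (intro divide_right_mono ln_le_minus_one) auto
  then have "log b px + log b py - log b p \<le> (px * py / p - 1) / ln b"
    using \<open>0 < p\<close> \<open>0 < px\<close> \<open>0 < py\<close> by (simp add: log_mult log_divide)
  then have "p * (log b px + log b py - log b p) \<le> p * ((px * py / p - 1) / ln b)"
    using \<open>0 < p\<close> by (intro mult_left_mono) auto
  also have "\<dots> = (px * py - p) / ln b" using \<open>0 < p\<close> lnb by (simp add: field_simps)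
  also have "\<dots> \<le> px * py / ln b" using \<open>0 < p\<close> lnb by (simp add: divide_right_mono)
  finally show ?thesis by (simp add: algebra_simps)
qed

context information_space
begin

abbreviation Ent :: "('a \<Rightarrow> 'x::countable) \<Rightarrow> real" where
  "Ent X \<equiv> entropy b (count_space UNIV) X"

abbreviation MI :: "('a \<Rightarrow> 'x::countable) \<Rightarrow> ('a \<Rightarrow> 'y::countable) \<Rightarrow> real" where
  "MI X Y \<equiv> mutual_information b (count_space UNIV) (count_space UNIV) X Y"

definition point_prob :: "('a \<Rightarrow> 'x) \<Rightarrow> 'x \<Rightarrow> real" where
  "point_prob X x = prob (X -` {x} \<inter> space M)"

definition entropy_term :: "('a \<Rightarrow> 'x) \<Rightarrow> 'x \<Rightarrow> real" where
  "entropy_term X x = - (point_prob X x * log b (point_prob X x))"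

definition has_finite_entropy :: "('a \<Rightarrow> 'x::countable) \<Rightarrow> bool" where
  "has_finite_entropy X \<longleftrightarrow> X \<in> measurable M (count_space UNIV) \<and> entropy_term X summable_on UNIV"

lemma has_finite_entropy_measurable:
  "has_finite_entropy X \<Longrightarrow> X \<in> measurable M (count_space UNIV)"
  by (simp add: has_finite_entropy_def)

lemma point_prob_nonneg: "0 \<le> point_prob X x"
  by (simp add: point_prob_def)

lemma log_point_prob_nonpos: "log b (point_prob X x) \<le> 0"
proof (cases "point_prob X x = 0")
  case False
  then have "0 < point_prob X x" using point_prob_nonneg[of X x] by linarith
  then show ?thesis using b_gt_1 by (simp add: point_prob_def log_le_zero_cancel_iff)
qed (simp add: log_def)

lemma entropy_term_nonneg: "0 \<le> entropy_term X x"
  using log_point_prob_nonpos[of X x] point_prob_nonneg[of X x]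
  by (simp add: entropy_term_def mult_nonneg_nonpos)

lemma point_prob_const: "point_prob (\<lambda>\<omega>. c) x = (if x = c then 1 else 0)"
  by (simp add: point_prob_def prob_space)

lemma point_prob_comp_inj:
  assumes "inj g"
  shows "point_prob (\<lambda>\<omega>. g (X \<omega>)) (g x) = point_prob X x"
proof -
  have "(\<lambda>\<omega>. g (X \<omega>)) -` {g x} = X -` {x}" using assms by (auto simp: inj_def)
  then show ?thesis by (simp add: point_prob_def)
qed

lemma point_prob_comp_notin_range:
  assumes "y \<notin> range g"
  shows "point_prob (\<lambda>\<omega>. g (X \<omega>)) y = 0"
proof -
  have "(\<lambda>\<omega>. g (X \<omega>)) -` {y} = {}" using assms by auto
  then show ?thesis by (simp add: point_prob_def)
qed

lemma distributed_point_prob: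
  fixes X :: "'a \<Rightarrow> 'x::countable"
  assumes X: "X \<in> measurable M (count_space UNIV)"
  shows "distributed M (count_space UNIV) X (\<lambda>x. ennreal (point_prob X x))"
  unfolding distributed_def
proof (intro conjI)
  show "distr M (count_space UNIV) X = density (count_space UNIV) (\<lambda>x. ennreal (point_prob X x))"
  proof (rule measure_eqI_countable[where A=UNIV])
    fix x :: 'x
    have "emeasure (distr M (count_space UNIV) X) {x} = ennreal (point_prob X x)"
      using X by (simp add: emeasure_distr emeasure_eq_measure point_prob_def)
    then show "emeasure (distr M (count_space UNIV) X) {x}
        = emeasure (density (count_space UNIV) (\<lambda>x. ennreal (point_prob X x))) {x}"
      by (simp add: emeasure_density nn_integral_indicator_singleton)
  qed auto
qed (use X in auto)

lemma entropy_eq_point_prob: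
  fixes X :: "'a \<Rightarrow> 'x::countable"
  assumes "X \<in> measurable M (count_space UNIV)"
  shows "Ent X = - (\<integral>x. point_prob X x * log b (point_prob X x) \<partial>count_space UNIV)"
  by (rule entropy_distr[OF distributed_point_prob[OF assms]]) (simp add: point_prob_nonneg)

lemma entropy_nonneg_countable:
  fixes X :: "'a \<Rightarrow> 'x::countable"
  assumes "X \<in> measurable M (count_space UNIV)"
  shows "0 \<le> Ent X"
proof -
  have "0 \<le> (\<integral>x. entropy_term X x \<partial>count_space UNIV)"
    by (rule Bochner_Integration.integral_nonneg) (rule entropy_term_nonneg)
  then show ?thesis
    by (simp add: entropy_eq_point_prob[OF assms] entropy_term_def)
qed

lemma entropy_const: "Ent (\<lambda>\<omega>. c) = 0"
proof -
  have "(\<lambda>x. point_prob (\<lambda>\<omega>. c) x * log b (point_prob (\<lambda>\<omega>. c) x)) = (\<lambda>x. 0)"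
    by (auto simp: point_prob_const fun_eq_iff)
  then show ?thesis by (subst entropy_eq_point_prob) auto
qed

lemma has_finite_entropy_const: "has_finite_entropy (\<lambda>\<omega>. c)"
  by (auto simp: has_finite_entropy_def entropy_term_def point_prob_const intro: summable_on_0)

lemma finite_entropy_point_prob:
  fixes X :: "'a \<Rightarrow> 'x::countable"
  assumes X: "has_finite_entropy X"
  shows "finite_entropy (count_space UNIV) X (point_prob X)"
proof -
  have "(\<lambda>x. point_prob X x * log b (point_prob X x)) summable_on UNIV"
    using X summable_on_uminus[of "entropy_term X" UNIV]
    by (simp add: has_finite_entropy_def entropy_term_def)
  then show ?thesis
    unfolding finite_entropy_def integrable_count_space_iff_summable_on
    using distributed_point_prob[OF has_finite_entropy_measurable[OF X]] point_prob_nonneg by auto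
qed

lemma has_finite_entropy_iff_finite_entropy:
  fixes X :: "'a \<Rightarrow> 'x::countable"
  shows "has_finite_entropy X \<longleftrightarrow> (\<exists>f. finite_entropy (count_space UNIV) X f)"
proof
  assume "has_finite_entropy X"
  then show "\<exists>f. finite_entropy (count_space UNIV) X f"
    using finite_entropy_point_prob by blast
next
  assume "\<exists>f. finite_entropy (count_space UNIV) X f"
  then obtain f where F: "finite_entropy (count_space UNIV) X f" ..
  then have D: "distributed M (count_space UNIV) X f" and nn: "\<And>x. 0 \<le> f x"
    by (auto simp: finite_entropy_def)
  then have X: "X \<in> measurable M (count_space UNIV)" by (simp add: distributed_def)
  have eq: "ennreal (f x) = ennreal (point_prob X x)" for x
  proof -
    have "ennreal (f x) = emeasure (density (count_space UNIV) (\<lambda>x. ennreal (f x))) {x}"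
      by (simp add: emeasure_density nn_integral_indicator_singleton)
    also have "\<dots> = emeasure (distr M (count_space UNIV) X) {x}"
      using D by (simp add: distributed_def)
    finally show ?thesis
      using X by (simp add: emeasure_distr emeasure_eq_measure point_prob_def)
  qed
  have "f = point_prob X"
  proof
    fix x
    show "f x = point_prob X x"
      using eq[of x] ennreal_inj[OF nn[of x] point_prob_nonneg[of X x]] by simp
  qed
  then have "(\<lambda>x. point_prob X x * log b (point_prob X x)) summable_on UNIV"
    using F by (simp add: finite_entropy_def integrable_count_space_iff_summable_on)
  then show "has_finite_entropy X"
    using X summable_on_uminus[of "entropy_term X" UNIV]
    by (simp add: has_finite_entropy_def entropy_term_def)
qed

lemma entropy_comp_inj:
  fixes X :: "'a \<Rightarrow> 'x::countable" and g :: "'x \<Rightarrow> 'y::countable"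
  assumes X: "X \<in> measurable M (count_space UNIV)" and g: "inj g"
  shows "Ent (\<lambda>\<omega>. g (X \<omega>)) = Ent X"
proof -
  have gX: "(\<lambda>\<omega>. g (X \<omega>)) \<in> measurable M (count_space UNIV)"
    using X by simp
  let ?F = "\<lambda>y. point_prob (\<lambda>\<omega>. g (X \<omega>)) y * log b (point_prob (\<lambda>\<omega>. g (X \<omega>)) y)"
  have "infsetsum ?F UNIV = infsetsum ?F (range g)"
    by (rule infsetsum_cong_neutral) (auto simp: point_prob_comp_notin_range)
  also have "\<dots> = infsetsum (\<lambda>x. ?F (g x)) UNIV"
    using g by (rule infsetsum_reindex)
  also have "\<dots> = infsetsum (\<lambda>x. point_prob X x * log b (point_prob X x)) UNIV"
    using g by (simp add: point_prob_comp_inj)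
  finally show ?thesis
    unfolding entropy_eq_point_prob[OF X] entropy_eq_point_prob[OF gX] infsetsum_def by simp
qed

lemma has_finite_entropy_comp_inj:
  fixes X :: "'a \<Rightarrow> 'x::countable" and g :: "'x \<Rightarrow> 'y::countable"
  assumes X: "has_finite_entropy X" and g: "inj g"
  shows "has_finite_entropy (\<lambda>\<omega>. g (X \<omega>))"
proof -
  let ?F = "entropy_term (\<lambda>\<omega>. g (X \<omega>))"
  have "?F \<circ> g = entropy_term X"
    using g by (simp add: fun_eq_iff entropy_term_def point_prob_comp_inj)
  then have "?F summable_on range g"
    using X g by (simp add: has_finite_entropy_def summable_on_reindex)
  then have "?F summable_on UNIV"
    by (rule summable_on_cong_neutral[THEN iffD1, rotated -1])
      (auto simp: entropy_term_def point_prob_comp_notin_range)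
  then show ?thesis
    using has_finite_entropy_measurable[OF X] by (simp add: has_finite_entropy_def)
qed

lemma sum_prob_disjoint_le:
  assumes "finite A" "\<And>a. a \<in> A \<Longrightarrow> E a \<in> events" "disjoint_family_on E A"
    "\<And>a. a \<in> A \<Longrightarrow> E a \<subseteq> C" "C \<in> events"
  shows "(\<Sum>a\<in>A. prob (E a)) \<le> prob C"
proof -
  have "(\<Sum>a\<in>A. prob (E a)) = prob (\<Union>a\<in>A. E a)"
    using assms by (intro finite_measure_finite_Union[symmetric]) auto
  also have "\<dots> \<le> prob C"
    using assms by (intro finite_measure_mono) auto
  finally show ?thesis .
qed

lemma sum_point_prob_le_1:
  fixes X :: "'a \<Rightarrow> 'x::countable"
  assumes X: "X \<in> measurable M (count_space UNIV)" and A: "finite A"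
  shows "(\<Sum>x\<in>A. point_prob X x) \<le> 1"
  using sum_prob_disjoint_le[OF A, of "\<lambda>x. X -` {x} \<inter> space M" "space M"]
    measurable_sets[OF X, of "{_}"]
  by (auto simp: point_prob_def disjoint_family_on_def prob_space)

lemma point_prob_pair:
  "point_prob (\<lambda>\<omega>. (X \<omega>, Y \<omega>)) (x, y) = prob ((X -` {x} \<inter> space M) \<inter> (Y -` {y} \<inter> space M))"
proof -
  have "(\<lambda>\<omega>. (X \<omega>, Y \<omega>)) -` {(x, y)} \<inter> space M = (X -` {x} \<inter> space M) \<inter> (Y -` {y} \<inter> space M)"
    by auto
  then show ?thesis by (simp add: point_prob_def)
qed

lemma sum_point_prob_pair_le_fst:
  fixes X :: "'a \<Rightarrow> 'x::countable" and Y :: "'a \<Rightarrow> 'y::countable"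
  assumes X: "X \<in> measurable M (count_space UNIV)" and Y: "Y \<in> measurable M (count_space UNIV)"
    and B: "finite B"
  shows "(\<Sum>y\<in>B. point_prob (\<lambda>\<omega>. (X \<omega>, Y \<omega>)) (x, y)) \<le> point_prob X x"
  unfolding point_prob_pair unfolding point_prob_def
  using measurable_sets[OF X, of "{_}"] measurable_sets[OF Y, of "{_}"]
  by (intro sum_prob_disjoint_le[OF B]) (auto simp: disjoint_family_on_def)

lemma sum_point_prob_pair_le_snd:
  fixes X :: "'a \<Rightarrow> 'x::countable" and Y :: "'a \<Rightarrow> 'y::countable"
  assumes X: "X \<in> measurable M (count_space UNIV)" and Y: "Y \<in> measurable M (count_space UNIV)"
    and A: "finite A"
  shows "(\<Sum>x\<in>A. point_prob (\<lambda>\<omega>. (X \<omega>, Y \<omega>)) (x, y)) \<le> point_prob Y y"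
  unfolding point_prob_pair unfolding point_prob_def
  using measurable_sets[OF X, of "{_}"] measurable_sets[OF Y, of "{_}"]
  by (intro sum_prob_disjoint_le[OF A]) (auto simp: disjoint_family_on_def)

lemma sum_sum_point_prob_pair_log_fst_le:
  fixes X :: "'a \<Rightarrow> 'x::countable" and Y :: "'a \<Rightarrow> 'y::countable"
  assumes X: "X \<in> measurable M (count_space UNIV)" and Y: "Y \<in> measurable M (count_space UNIV)"
    and B: "finite B"
  shows "(\<Sum>x\<in>A. \<Sum>y\<in>B. point_prob (\<lambda>\<omega>. (X \<omega>, Y \<omega>)) (x, y) * (- log b (point_prob X x)))
    \<le> sum (entropy_term X) A"
proof (rule sum_mono)
  fix x
  have "(\<Sum>y\<in>B. point_prob (\<lambda>\<omega>. (X \<omega>, Y \<omega>)) (x, y) * (- log b (point_prob X x)))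
      = (\<Sum>y\<in>B. point_prob (\<lambda>\<omega>. (X \<omega>, Y \<omega>)) (x, y)) * (- log b (point_prob X x))"
    by (rule sum_distrib_right[symmetric])
  also have "\<dots> \<le> point_prob X x * (- log b (point_prob X x))"
    using sum_point_prob_pair_le_fst[OF X Y B] log_point_prob_nonpos[of X x]
    by (intro mult_right_mono) auto
  finally show "(\<Sum>y\<in>B. point_prob (\<lambda>\<omega>. (X \<omega>, Y \<omega>)) (x, y) * (- log b (point_prob X x)))
      \<le> entropy_term X x"
    by (simp add: entropy_term_def)
qed

lemma sum_sum_point_prob_pair_log_snd_le:
  fixes X :: "'a \<Rightarrow> 'x::countable" and Y :: "'a \<Rightarrow> 'y::countable"
  assumes X: "X \<in> measurable M (count_space UNIV)" and Y: "Y \<in> measurable M (count_space UNIV)"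
    and A: "finite A"
  shows "(\<Sum>y\<in>B. \<Sum>x\<in>A. point_prob (\<lambda>\<omega>. (X \<omega>, Y \<omega>)) (x, y) * (- log b (point_prob Y y)))
    \<le> sum (entropy_term Y) B"
proof (rule sum_mono)
  fix y
  have "(\<Sum>x\<in>A. point_prob (\<lambda>\<omega>. (X \<omega>, Y \<omega>)) (x, y) * (- log b (point_prob Y y)))
      = (\<Sum>x\<in>A. point_prob (\<lambda>\<omega>. (X \<omega>, Y \<omega>)) (x, y)) * (- log b (point_prob Y y))"
    by (rule sum_distrib_right[symmetric])
  also have "\<dots> \<le> point_prob Y y * (- log b (point_prob Y y))"
    using sum_point_prob_pair_le_snd[OF X Y A] log_point_prob_nonpos[of Y y]
    by (intro mult_right_mono) auto
  finally show "(\<Sum>x\<in>A. point_prob (\<lambda>\<omega>. (X \<omega>, Y \<omega>)) (x, y) * (- log b (point_prob Y y)))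
      \<le> entropy_term Y y"
    by (simp add: entropy_term_def)
qed

lemma sum_sum_point_prob_product_le:
  fixes X :: "'a \<Rightarrow> 'x::countable" and Y :: "'a \<Rightarrow> 'y::countable"
  assumes X: "X \<in> measurable M (count_space UNIV)" and Y: "Y \<in> measurable M (count_space UNIV)"
    and "finite A" "finite B"
  shows "(\<Sum>x\<in>A. \<Sum>y\<in>B. point_prob X x * point_prob Y y / ln b) \<le> 1 / ln b"
proof -
  have "(\<Sum>x\<in>A. point_prob X x) * (\<Sum>y\<in>B. point_prob Y y) \<le> 1 * 1"
    using sum_point_prob_le_1[OF X \<open>finite A\<close>] sum_point_prob_le_1[OF Y \<open>finite B\<close>]
    by (intro mult_mono) (auto intro: sum_nonneg point_prob_nonneg)
  then show ?thesis
    using b_gt_1 by (simp add: sum_product[symmetric] sum_divide_distrib[symmetric] divide_right_mono)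
qed

text \<open>Finiteness of the joint entropy comes from the pointwise bound
  \<open>neg_mult_log_le_product_bound\<close> with \<open>p = P(X=x,Y=y)\<close>, whose right-hand side sums to at most \<open>1 / ln b + H(X) + H(Y)\<close>.\<close>

lemma sum_entropy_term_pair_le:
  fixes X :: "'a \<Rightarrow> 'x::countable" and Y :: "'a \<Rightarrow> 'y::countable"
  assumes X: "has_finite_entropy X" and Y: "has_finite_entropy Y" and F: "finite F"
  shows "sum (entropy_term (\<lambda>\<omega>. (X \<omega>, Y \<omega>))) F
    \<le> 1 / ln b + (\<Sum>\<^sub>\<infinity>x. entropy_term X x) + (\<Sum>\<^sub>\<infinity>y. entropy_term Y y)"
proof -
  note mX = has_finite_entropy_measurable[OF X] and mY = has_finite_entropy_measurable[OF Y]
  let ?p = "point_prob (\<lambda>\<omega>. (X \<omega>, Y \<omega>))" and ?pX = "point_prob X" and ?pY = "point_prob Y"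
  define A where "A = fst ` F"
  define B where "B = snd ` F"
  have AB: "finite A" "finite B" "F \<subseteq> A \<times> B"
    using F by (auto simp: A_def B_def intro: rev_image_eqI)
  have "sum (entropy_term (\<lambda>\<omega>. (X \<omega>, Y \<omega>))) F \<le> sum (entropy_term (\<lambda>\<omega>. (X \<omega>, Y \<omega>))) (A \<times> B)"
    using AB by (intro sum_mono2) (auto simp: entropy_term_nonneg)
  also have "\<dots> \<le> (\<Sum>(x, y)\<in>A \<times> B. ?pX x * ?pY y / ln b + ?p (x, y) * (- log b (?pX x))
      + ?p (x, y) * (- log b (?pY y)))"
  proof (rule sum_mono, clarify)
    fix x y
    show "entropy_term (\<lambda>\<omega>. (X \<omega>, Y \<omega>)) (x, y) \<le> ?pX x * ?pY y / ln b
        + ?p (x, y) * (- log b (?pX x)) + ?p (x, y) * (- log b (?pY y))"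
      unfolding entropy_term_def
      using sum_point_prob_pair_le_fst[OF mX mY, of "{y}" x]
        sum_point_prob_pair_le_snd[OF mX mY, of "{x}" y]
      by (intro neg_mult_log_le_product_bound[OF b_gt_1 point_prob_nonneg]) simp_all
  qed
  also have "\<dots> = (\<Sum>x\<in>A. \<Sum>y\<in>B. ?pX x * ?pY y / ln b)
      + (\<Sum>x\<in>A. \<Sum>y\<in>B. ?p (x, y) * (- log b (?pX x)))
      + (\<Sum>x\<in>A. \<Sum>y\<in>B. ?p (x, y) * (- log b (?pY y)))"
    by (simp only: sum.cartesian_product[symmetric] sum.distrib)
  also have "\<dots> \<le> 1 / ln b + sum (entropy_term X) A + sum (entropy_term Y) B"
  proof -
    have "(\<Sum>x\<in>A. \<Sum>y\<in>B. ?pX x * ?pY y / ln b) \<le> 1 / ln b"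
      by (rule sum_sum_point_prob_product_le[OF mX mY AB(1,2)])
    moreover have "(\<Sum>x\<in>A. \<Sum>y\<in>B. ?p (x, y) * (- log b (?pY y))) \<le> sum (entropy_term Y) B"
      using sum_sum_point_prob_pair_log_snd_le[OF mX mY AB(1), of B] by (simp only: sum.swap[of _ A])
    ultimately show ?thesis
      using sum_sum_point_prob_pair_log_fst_le[OF mX mY AB(2), of A] by linarith
  qed
  also have "\<dots> \<le> 1 / ln b + (\<Sum>\<^sub>\<infinity>x. entropy_term X x) + (\<Sum>\<^sub>\<infinity>y. entropy_term Y y)"
    using X Y AB
    by (intro add_mono order.refl finite_sum_le_infsum) (auto simp: has_finite_entropy_def entropy_term_nonneg)
  finally show ?thesis .
qed

lemma has_finite_entropy_pair:
  fixes X :: "'a \<Rightarrow> 'x::countable" and Y :: "'a \<Rightarrow> 'y::countable"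
  assumes X: "has_finite_entropy X" and Y: "has_finite_entropy Y"
  shows "has_finite_entropy (\<lambda>\<omega>. (X \<omega>, Y \<omega>))"
proof -
  have "entropy_term (\<lambda>\<omega>. (X \<omega>, Y \<omega>)) summable_on UNIV"
    using sum_entropy_term_pair_le[OF X Y]
    by (intro nonneg_bdd_above_summable_on) (auto simp: entropy_term_nonneg bdd_above_def)
  moreover have "(\<lambda>\<omega>. (X \<omega>, Y \<omega>)) \<in> measurable M (count_space UNIV)"
    using measurable_Pair[OF has_finite_entropy_measurable[OF X] has_finite_entropy_measurable[OF Y]]
    by (simp add: count_space_UNIV_pair)
  ultimately show ?thesis by (simp add: has_finite_entropy_def)
qed

lemma entropy_pair_swap:
  fixes X :: "'a \<Rightarrow> 'x::countable" and Y :: "'a \<Rightarrow> 'y::countable"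
  assumes "X \<in> measurable M (count_space UNIV)" "Y \<in> measurable M (count_space UNIV)"
  shows "Ent (\<lambda>\<omega>. (Y \<omega>, X \<omega>)) = Ent (\<lambda>\<omega>. (X \<omega>, Y \<omega>))"
  using entropy_comp_inj[of "\<lambda>\<omega>. (X \<omega>, Y \<omega>)" "\<lambda>(x, y). (y, x)"] measurable_Pair[OF assms]
  by (simp add: count_space_UNIV_pair inj_def)

lemma mutual_information_eq_entropy:
  fixes X :: "'a \<Rightarrow> 'x::countable" and Y :: "'a \<Rightarrow> 'y::countable"
  assumes X: "has_finite_entropy X" and Y: "has_finite_entropy Y"
  shows "MI X Y = Ent X + Ent Y - Ent (\<lambda>\<omega>. (X \<omega>, Y \<omega>))"
proof -
  note FX = finite_entropy_point_prob[OF X] and FY = finite_entropy_point_prob[OF Y]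
    and FXY = finite_entropy_point_prob[OF has_finite_entropy_pair[OF X Y], folded count_space_UNIV_pair]
  note DXY = finite_entropy_distributed[OF FXY]
  show ?thesis
    using mutual_information_eq_entropy_conditional_entropy_distr[OF
        sigma_finite_count_space_UNIV sigma_finite_count_space_UNIV
        finite_entropy_distributed[OF FX] _ finite_entropy_distributed[OF FY] _ DXY _
        finite_entropy_integrable_transform[OF FX DXY]
        finite_entropy_integrable_transform[OF FY DXY]
        finite_entropy_integrable[OF FXY]]
    by (simp add: point_prob_nonneg count_space_UNIV_pair)
qed

lemma entropy_pair_indep:
  fixes X Y :: "'a \<Rightarrow> 'x::countable"
  assumes "has_finite_entropy X" "has_finite_entropy Y"
    and "indep_var (count_space UNIV) X (count_space UNIV) Y"
  shows "Ent (\<lambda>\<omega>. (X \<omega>, Y \<omega>)) = Ent X + Ent Y"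
  using mutual_information_eq_entropy[OF assms(1,2)] assms(3)[unfolded mutual_information_indep_vars]
  by simp

text \<open>This is the nonnegativity of the conditional mutual information \<open>I(X; V | Y)\<close>.\<close>

lemma mutual_information_le_pair:
  fixes X :: "'a \<Rightarrow> 'x::countable" and Y :: "'a \<Rightarrow> 'y::countable" and V :: "'a \<Rightarrow> 'v::countable"
  assumes X: "has_finite_entropy X" and Y: "has_finite_entropy Y" and V: "has_finite_entropy V"
  shows "MI X Y \<le> MI X (\<lambda>\<omega>. (V \<omega>, Y \<omega>))"
proof -
  have "0 \<le> conditional_mutual_information b (count_space UNIV) (count_space UNIV) (count_space UNIV) X V Y"
    using conditional_mutual_information_generic_nonneg'[OF
        sigma_finite_count_space_UNIV sigma_finite_count_space_UNIV sigma_finite_count_space_UNIV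
        finite_entropy_point_prob[OF X] finite_entropy_point_prob[OF Y]
        finite_entropy_point_prob[OF has_finite_entropy_pair[OF V Y], folded count_space_UNIV_pair]
        finite_entropy_point_prob[OF has_finite_entropy_pair[OF X Y], folded count_space_UNIV_pair]
        finite_entropy_point_prob[OF has_finite_entropy_pair[OF X has_finite_entropy_pair[OF V Y]],
          folded count_space_UNIV_pair]] .
  then show ?thesis
    by (simp add: conditional_mutual_information_def count_space_UNIV_pair)
qed

lemma mutual_information_comp_inj_right:
  fixes X :: "'a \<Rightarrow> 'x::countable" and Y :: "'a \<Rightarrow> 'y::countable" and g :: "'y \<Rightarrow> 'z::countable"
  assumes X: "has_finite_entropy X" and Y: "has_finite_entropy Y" and g: "inj g"
  shows "MI X (\<lambda>\<omega>. g (Y \<omega>)) = MI X Y"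
proof -
  have "Ent (\<lambda>\<omega>. (\<lambda>(x, y). (x, g y)) (X \<omega>, Y \<omega>)) = Ent (\<lambda>\<omega>. (X \<omega>, Y \<omega>))"
    using g by (intro entropy_comp_inj has_finite_entropy_measurable has_finite_entropy_pair X Y)
      (auto simp: inj_def)
  then show ?thesis
    using X Y g
    by (simp add: mutual_information_eq_entropy has_finite_entropy_comp_inj has_finite_entropy_measurable
        entropy_comp_inj)
qed

lemma entropy_le_entropy_pair:
  fixes S :: "'a \<Rightarrow> 'x::countable" and Z :: "'a \<Rightarrow> 'z::countable"
  assumes S: "has_finite_entropy S" and Z: "has_finite_entropy Z"
  shows "Ent Z \<le> Ent (\<lambda>\<omega>. (S \<omega>, Z \<omega>))"
proof -
  have SZ: "has_finite_entropy (\<lambda>\<omega>. (S \<omega>, Z \<omega>))" by (rule has_finite_entropy_pair[OF S Z])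
  have "Ent (\<lambda>\<omega>. (\<lambda>(s, z). (s, s, z)) (S \<omega>, Z \<omega>)) = Ent (\<lambda>\<omega>. (S \<omega>, Z \<omega>))"
    by (intro entropy_comp_inj has_finite_entropy_measurable[OF SZ]) (auto simp: inj_def)
  then have "MI S (\<lambda>\<omega>. (S \<omega>, Z \<omega>)) = Ent S"
    by (simp add: mutual_information_eq_entropy[OF S SZ])
  then show ?thesis
    using mutual_information_le_pair[OF S Z S] by (simp add: mutual_information_eq_entropy[OF S Z])
qed

lemma indep_var_of_indep_vars:
  assumes ind: "indep_vars M' X I" and ij: "i \<in> I" "j \<in> I" "i \<noteq> j"
  shows "indep_var (M' i) (X i) (M' j) (X j)"
proof -
  have "indep_var (PiM {i} M') (\<lambda>\<omega>. restrict (\<lambda>k. X k \<omega>) {i}) (PiM {j} M') (\<lambda>\<omega>. restrict (\<lambda>k. X k \<omega>) {j})"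
    using ij by (intro indep_var_restrict[OF ind]) auto
  then have "indep_var (M' i) ((\<lambda>f. f i) \<circ> (\<lambda>\<omega>. restrict (\<lambda>k. X k \<omega>) {i}))
      (M' j) ((\<lambda>f. f j) \<circ> (\<lambda>\<omega>. restrict (\<lambda>k. X k \<omega>) {j}))"
    by (rule indep_var_compose) (auto intro: measurable_component_singleton)
  then show ?thesis by (simp add: o_def)
qed

lemma measurable_map_PiM_count_space:
  assumes "set L \<subseteq> I"
  shows "(\<lambda>f. map f L) \<in> measurable (PiM I (\<lambda>_. count_space (UNIV::'x::countable set))) (count_space UNIV)"
  using assms
proof (induction L)
  case (Cons i L)
  have "(\<lambda>f. (f i, map f L)) \<in> measurable (PiM I (\<lambda>_. count_space (UNIV::'x set))) (count_space UNIV)"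
    using Cons measurable_Pair[OF measurable_component_singleton, of i I "\<lambda>_. count_space UNIV"]
    by (simp add: count_space_UNIV_pair)
  then have "(\<lambda>f. (\<lambda>(a, l). a # l) (f i, map f L))
      \<in> measurable (PiM I (\<lambda>_. count_space (UNIV::'x set))) (count_space UNIV)"
    by (rule measurable_compose) simp
  then show ?case by simp
qed simp

text \<open>A finite family \<open>W\<^sub>i\<close>, \<open>i \<in> L\<close>, is treated as the single countably valued variable
  \<open>\<lambda>\<omega>. map (\<lambda>i. W i \<omega>) L\<close>; a single \<open>W j\<close> is wrapped as \<open>[W j]\<close> because \<open>indep_var\<close>
  relates variables of one type only.\<close>

lemma indep_var_singleton_map:
  fixes W :: "'i \<Rightarrow> 'a \<Rightarrow> 'x::countable"
  assumes ind: "indep_vars (\<lambda>_. count_space UNIV) W I" and "j \<in> I" "set L \<subseteq> I" "j \<notin> set L"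
  shows "indep_var (count_space UNIV) (\<lambda>\<omega>. [W j \<omega>]) (count_space UNIV) (\<lambda>\<omega>. map (\<lambda>i. W i \<omega>) L)"
proof -
  have "indep_var (PiM {j} (\<lambda>_. count_space UNIV)) (\<lambda>\<omega>. restrict (\<lambda>i. W i \<omega>) {j})
     (PiM (set L) (\<lambda>_. count_space UNIV)) (\<lambda>\<omega>. restrict (\<lambda>i. W i \<omega>) (set L))"
    using assms by (intro indep_var_restrict[OF ind]) auto
  then have "indep_var (count_space UNIV) ((\<lambda>f. map f [j]) \<circ> (\<lambda>\<omega>. restrict (\<lambda>i. W i \<omega>) {j}))
     (count_space UNIV) ((\<lambda>f. map f L) \<circ> (\<lambda>\<omega>. restrict (\<lambda>i. W i \<omega>) (set L)))"
    by (rule indep_var_compose) (rule measurable_map_PiM_count_space, simp)+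
  moreover have "(\<lambda>f. map f [j]) \<circ> (\<lambda>\<omega>. restrict (\<lambda>i. W i \<omega>) {j}) = (\<lambda>\<omega>. [W j \<omega>])"
    and "(\<lambda>f. map f L) \<circ> (\<lambda>\<omega>. restrict (\<lambda>i. W i \<omega>) (set L)) = (\<lambda>\<omega>. map (\<lambda>i. W i \<omega>) L)"
    by (simp_all add: fun_eq_iff)
  ultimately show ?thesis by (simp only:)
qed

lemma has_finite_entropy_map:
  fixes W :: "'i \<Rightarrow> 'a \<Rightarrow> 'x::countable"
  assumes "\<And>i. i \<in> set L \<Longrightarrow> has_finite_entropy (W i)"
  shows "has_finite_entropy (\<lambda>\<omega>. map (\<lambda>i. W i \<omega>) L)"
  using assms
proof (induction L)
  case (Cons i L)
  then have "has_finite_entropy (\<lambda>\<omega>. (\<lambda>(a, l). a # l) (W i \<omega>, map (\<lambda>i. W i \<omega>) L))"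
    by (intro has_finite_entropy_comp_inj[OF has_finite_entropy_pair]) (auto simp: inj_def)
  then show ?case by simp
qed (simp add: has_finite_entropy_const)

lemma entropy_Cons_indep:
  fixes W :: "'i \<Rightarrow> 'a \<Rightarrow> 'x::countable"
  assumes ind: "indep_vars (\<lambda>_. count_space UNIV) W I" and fin: "\<And>i. i \<in> I \<Longrightarrow> has_finite_entropy (W i)"
    and j: "j \<in> I" and L: "set L \<subseteq> I" "j \<notin> set L"
  shows "Ent (\<lambda>\<omega>. W j \<omega> # map (\<lambda>i. W i \<omega>) L) = Ent (W j) + Ent (\<lambda>\<omega>. map (\<lambda>i. W i \<omega>) L)"
proof -
  let ?Z = "\<lambda>\<omega>. map (\<lambda>i. W i \<omega>) L"
  have Wj: "has_finite_entropy (W j)" and Z: "has_finite_entropy ?Z"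
    using fin j L by (auto intro: has_finite_entropy_map)
  have Wj': "has_finite_entropy (\<lambda>\<omega>. [W j \<omega>])"
    using has_finite_entropy_comp_inj[OF Wj, of "\<lambda>x. [x]"] by (simp add: inj_def)
  have "Ent (\<lambda>\<omega>. (\<lambda>(x, z). x # z) (W j \<omega>, ?Z \<omega>)) = Ent (\<lambda>\<omega>. (W j \<omega>, ?Z \<omega>))"
    and "Ent (\<lambda>\<omega>. (\<lambda>(x, z). ([x], z)) (W j \<omega>, ?Z \<omega>)) = Ent (\<lambda>\<omega>. (W j \<omega>, ?Z \<omega>))"
    and "Ent (\<lambda>\<omega>. (\<lambda>x. [x]) (W j \<omega>)) = Ent (W j)"
    by (intro entropy_comp_inj has_finite_entropy_measurable has_finite_entropy_pair Wj Z;
        auto simp: inj_def)+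
  moreover have "Ent (\<lambda>\<omega>. ([W j \<omega>], ?Z \<omega>)) = Ent (\<lambda>\<omega>. [W j \<omega>]) + Ent ?Z"
    by (rule entropy_pair_indep[OF Wj' Z indep_var_singleton_map[OF ind j L]])
  ultimately show ?thesis by simp
qed

lemma sum_mutual_information_indep_le:
  fixes W :: "'i \<Rightarrow> 'a \<Rightarrow> 'x::countable" and S :: "'a \<Rightarrow> 'c::countable"
  assumes ind: "indep_vars (\<lambda>_. count_space UNIV) W I"
    and fin: "\<And>i. i \<in> I \<Longrightarrow> has_finite_entropy (W i)" and S: "has_finite_entropy S"
    and "finite J" "J \<subseteq> I" "set L \<subseteq> I" "J \<inter> set L = {}"
  shows "(\<Sum>j\<in>J. MI (W j) (\<lambda>\<omega>. (S \<omega>, map (\<lambda>i. W i \<omega>) L)))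
    \<le> Ent (\<lambda>\<omega>. (S \<omega>, map (\<lambda>i. W i \<omega>) L)) - Ent (\<lambda>\<omega>. map (\<lambda>i. W i \<omega>) L)"
  using assms(4-7)
proof (induction J arbitrary: L rule: finite_induct)
  case empty
  have "has_finite_entropy (\<lambda>\<omega>. map (\<lambda>i. W i \<omega>) L)"
    using empty fin by (intro has_finite_entropy_map) auto
  then show ?case
    using entropy_le_entropy_pair[OF S] by simp
next
  case (insert j J)
  let ?Z = "\<lambda>\<omega>. map (\<lambda>i. W i \<omega>) L"
  have j: "j \<in> I" "j \<notin> set L" and JI: "J \<subseteq> I" and L: "set L \<subseteq> I"
    using insert.prems by auto
  have Wj: "has_finite_entropy (W j)" using fin j by simp
  have SZ: "has_finite_entropy (\<lambda>\<omega>. (S \<omega>, ?Z \<omega>))"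
    using fin L by (intro has_finite_entropy_pair[OF S] has_finite_entropy_map) auto
  have WjSZ: "has_finite_entropy (\<lambda>\<omega>. (W j \<omega>, S \<omega>, ?Z \<omega>))"
    by (rule has_finite_entropy_pair[OF Wj SZ])
  have shift: "Ent (\<lambda>\<omega>. (S \<omega>, W j \<omega> # ?Z \<omega>)) = Ent (\<lambda>\<omega>. (W j \<omega>, S \<omega>, ?Z \<omega>))"
    using entropy_comp_inj[OF has_finite_entropy_measurable[OF WjSZ], of "\<lambda>(x, s, z). (s, x # z)"]
    by (simp add: inj_def)
  have mono: "MI (W i) (\<lambda>\<omega>. (S \<omega>, ?Z \<omega>)) \<le> MI (W i) (\<lambda>\<omega>. (S \<omega>, W j \<omega> # ?Z \<omega>))"
    if "i \<in> J" for i
  proof -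
    have Wi: "has_finite_entropy (W i)" using that JI fin by auto
    have "MI (W i) (\<lambda>\<omega>. (\<lambda>(x, s, z). (s, x # z)) (W j \<omega>, S \<omega>, ?Z \<omega>))
        = MI (W i) (\<lambda>\<omega>. (W j \<omega>, S \<omega>, ?Z \<omega>))"
      by (rule mutual_information_comp_inj_right[OF Wi WjSZ]) (auto simp: inj_def)
    then show ?thesis using mutual_information_le_pair[OF Wi SZ Wj] by simp
  qed
  have "(\<Sum>i\<in>J. MI (W i) (\<lambda>\<omega>. (S \<omega>, ?Z \<omega>))) \<le> (\<Sum>i\<in>J. MI (W i) (\<lambda>\<omega>. (S \<omega>, W j \<omega> # ?Z \<omega>)))"
    using mono by (rule sum_mono)
  also have "\<dots> \<le> Ent (\<lambda>\<omega>. (S \<omega>, W j \<omega> # ?Z \<omega>)) - Ent (\<lambda>\<omega>. W j \<omega> # ?Z \<omega>)"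
    using insert.IH[of "j # L"] insert.prems insert.hyps by auto
  also have "\<dots> = Ent (\<lambda>\<omega>. (W j \<omega>, S \<omega>, ?Z \<omega>)) - Ent (W j) - Ent ?Z"
    using shift entropy_Cons_indep[OF ind fin j(1) L j(2)] by simp
  finally show ?case
    using insert.hyps mutual_information_eq_entropy[OF Wj SZ] by simp
qed

lemma mutual_information_pair_indep:
  fixes X Y :: "'a \<Rightarrow> 'x::countable" and S :: "'a \<Rightarrow> 'c::countable"
  assumes X: "has_finite_entropy X" and Y: "has_finite_entropy Y" and S: "has_finite_entropy S"
    and ind: "indep_var (count_space UNIV) X (count_space UNIV) Y"
  shows "MI (\<lambda>\<omega>. (X \<omega>, Y \<omega>)) S = MI X S + MI Y (\<lambda>\<omega>. (S \<omega>, X \<omega>))"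
proof -
  have XY: "has_finite_entropy (\<lambda>\<omega>. (X \<omega>, Y \<omega>))" and SX: "has_finite_entropy (\<lambda>\<omega>. (S \<omega>, X \<omega>))"
    using X Y S by (auto intro: has_finite_entropy_pair)
  have "Ent (\<lambda>\<omega>. (\<lambda>((x, y), s). (y, s, x)) ((X \<omega>, Y \<omega>), S \<omega>)) = Ent (\<lambda>\<omega>. ((X \<omega>, Y \<omega>), S \<omega>))"
    by (intro entropy_comp_inj has_finite_entropy_measurable has_finite_entropy_pair XY S)
      (auto simp: inj_def)
  then show ?thesis
    using entropy_pair_indep[OF X Y ind]
      entropy_pair_swap[OF has_finite_entropy_measurable[OF S] has_finite_entropy_measurable[OF X]]
    by (simp add: mutual_information_eq_entropy XY X Y S SX)
qed

lemma sum_mutual_information_indep_le_entropy: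
  fixes W :: "'i \<Rightarrow> 'a \<Rightarrow> 'x::countable" and S :: "'a \<Rightarrow> 'c::countable"
  assumes ind: "indep_vars (\<lambda>_. count_space UNIV) W I"
    and fin: "\<And>i. i \<in> I \<Longrightarrow> has_finite_entropy (W i)" and S: "has_finite_entropy S"
    and "finite I"
  shows "(\<Sum>i\<in>I. MI (W i) S) \<le> Ent S"
proof -
  have "MI (W i) (\<lambda>\<omega>. (\<lambda>s. (s, [] :: 'x list)) (S \<omega>)) = MI (W i) S" if "i \<in> I" for i
    using that fin by (intro mutual_information_comp_inj_right S) (auto simp: inj_def)
  then have "(\<Sum>i\<in>I. MI (W i) S) = (\<Sum>i\<in>I. MI (W i) (\<lambda>\<omega>. (S \<omega>, map (\<lambda>i. W i \<omega>) [])))"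
    by (intro sum.cong) auto
  moreover have "Ent (\<lambda>\<omega>. (\<lambda>s. (s, [] :: 'x list)) (S \<omega>)) = Ent S"
    by (intro entropy_comp_inj has_finite_entropy_measurable S) (auto simp: inj_def)
  ultimately show ?thesis
    using sum_mutual_information_indep_le[OF ind fin S \<open>finite I\<close>, of "[]"]
    by (simp add: entropy_const)
qed

lemma sum_mutual_information_conditioned_le:
  fixes W :: "'i \<Rightarrow> 'a \<Rightarrow> 'x::countable" and S :: "'a \<Rightarrow> 'c::countable"
  assumes ind: "indep_vars (\<lambda>_. count_space UNIV) W I"
    and fin: "\<And>i. i \<in> I \<Longrightarrow> has_finite_entropy (W i)" and S: "has_finite_entropy S"
    and "finite I" and a: "a \<in> I"
  shows "(\<Sum>v\<in>I - {a}. MI (W v) (\<lambda>\<omega>. (S \<omega>, W a \<omega>))) \<le> Ent S - MI (W a) S"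
proof -
  have Wa: "has_finite_entropy (W a)" using a fin by simp
  have SWa: "has_finite_entropy (\<lambda>\<omega>. (S \<omega>, W a \<omega>))" by (rule has_finite_entropy_pair[OF S Wa])
  have "MI (W v) (\<lambda>\<omega>. (\<lambda>(s, x). (s, [x])) (S \<omega>, W a \<omega>)) = MI (W v) (\<lambda>\<omega>. (S \<omega>, W a \<omega>))"
    if "v \<in> I" for v
    using that fin by (intro mutual_information_comp_inj_right SWa) (auto simp: inj_def)
  then have "(\<Sum>v\<in>I - {a}. MI (W v) (\<lambda>\<omega>. (S \<omega>, W a \<omega>)))
      = (\<Sum>v\<in>I - {a}. MI (W v) (\<lambda>\<omega>. (S \<omega>, map (\<lambda>i. W i \<omega>) [a])))"
    by (intro sum.cong) auto
  moreover have "Ent (\<lambda>\<omega>. (\<lambda>(s, x). (s, [x])) (S \<omega>, W a \<omega>)) = Ent (\<lambda>\<omega>. (S \<omega>, W a \<omega>))"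
    and "Ent (\<lambda>\<omega>. (\<lambda>x. [x]) (W a \<omega>)) = Ent (W a)"
    by (intro entropy_comp_inj has_finite_entropy_measurable SWa Wa; auto simp: inj_def)+
  ultimately have "(\<Sum>v\<in>I - {a}. MI (W v) (\<lambda>\<omega>. (S \<omega>, W a \<omega>)))
      \<le> Ent (\<lambda>\<omega>. (S \<omega>, W a \<omega>)) - Ent (W a)"
    using sum_mutual_information_indep_le[OF ind fin S, of "I - {a}" "[a]"] \<open>finite I\<close> a by simp
  then show ?thesis
    using entropy_pair_swap[OF has_finite_entropy_measurable[OF Wa] has_finite_entropy_measurable[OF S]]
    by (simp add: mutual_information_eq_entropy[OF Wa S])
qed

lemma sum_pairwise_mutual_information_le:
  fixes W :: "'i \<Rightarrow> 'a \<Rightarrow> 'x::countable" and S :: "'a \<Rightarrow> 'c::countable"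
  assumes ind: "indep_vars (\<lambda>_. count_space UNIV) W I"
    and fin: "\<And>i. i \<in> I \<Longrightarrow> has_finite_entropy (W i)" and S: "has_finite_entropy S"
    and "finite I" and card: "2 \<le> card I"
  shows "(\<Sum>(a, v)\<in>Sigma I (\<lambda>a. I - {a}). MI (\<lambda>\<omega>. (W a \<omega>, W v \<omega>)) S)
    \<le> 2 * (real (card I) - 1) * Ent S"
proof -
  have row: "(\<Sum>v\<in>I - {a}. MI (\<lambda>\<omega>. (W a \<omega>, W v \<omega>)) S) \<le> (real (card I) - 2) * MI (W a) S + Ent S"
    if a: "a \<in> I" for a
  proof -
    have "(\<Sum>v\<in>I - {a}. MI (\<lambda>\<omega>. (W a \<omega>, W v \<omega>)) S)
        = (\<Sum>v\<in>I - {a}. MI (W a) S + MI (W v) (\<lambda>\<omega>. (S \<omega>, W a \<omega>)))"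
      using a fin by (intro sum.cong refl mutual_information_pair_indep S indep_var_of_indep_vars[OF ind]) auto
    also have "\<dots> \<le> real (card I - 1) * MI (W a) S + (Ent S - MI (W a) S)"
      using sum_mutual_information_conditioned_le[OF ind fin S \<open>finite I\<close> a] \<open>finite I\<close> a
      by (simp add: sum.distrib)
    finally show ?thesis using card by (simp add: of_nat_diff algebra_simps)
  qed
  have "(\<Sum>(a, v)\<in>Sigma I (\<lambda>a. I - {a}). MI (\<lambda>\<omega>. (W a \<omega>, W v \<omega>)) S)
      = (\<Sum>a\<in>I. \<Sum>v\<in>I - {a}. MI (\<lambda>\<omega>. (W a \<omega>, W v \<omega>)) S)"
    using \<open>finite I\<close> by (simp add: sum.Sigma)
  also have "\<dots> \<le> (\<Sum>a\<in>I. (real (card I) - 2) * MI (W a) S + Ent S)"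
    using row by (rule sum_mono)
  also have "\<dots> = (real (card I) - 2) * (\<Sum>a\<in>I. MI (W a) S) + real (card I) * Ent S"
    by (simp add: sum.distrib sum_distrib_left)
  also have "\<dots> \<le> (real (card I) - 2) * Ent S + real (card I) * Ent S"
    using sum_mutual_information_indep_le_entropy[OF ind fin S \<open>finite I\<close>] card
    by (intro add_right_mono mult_left_mono) auto
  finally show ?thesis by (simp add: algebra_simps)
qed

end

theorem mainTheorem5:
  fixes M :: "'a measure" and b :: real and D :: nat
    and W :: "nat \<Rightarrow> 'a \<Rightarrow> 'b::countable"
    and S :: "'a \<Rightarrow> 'c::countable"
  assumes "information_space M b"
    and "D \<ge> 2"
    and "prob_space.indep_vars M (\<lambda>_. count_space UNIV) W {1..D}"
    and "\<And>d. d \<in> {1..D} \<Longrightarrow>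
           \<exists>f. information_space.finite_entropy M b (count_space UNIV) (W d) f"
    and "\<exists>f. information_space.finite_entropy M b (count_space UNIV) S f"
  shows "(\<Sum>(d1, d2) \<in> {(d1, d2). d1 \<in> {1..D} \<and> d2 \<in> {1..D} \<and> d1 \<noteq> d2}.
            prob_space.mutual_information M b (count_space UNIV) (count_space UNIV)
              (\<lambda>x. (W d1 x, W d2 x)) S)
         \<le> (2 * real D - 1) * prob_space.entropy M b (count_space UNIV) S"
proof -
  interpret information_space M b by fact
  have W: "\<And>d. d \<in> {1..D} \<Longrightarrow> has_finite_entropy (W d)" and S: "has_finite_entropy S"
    using assms(4,5) by (simp_all add: has_finite_entropy_iff_finite_entropy)
  have "{(d1, d2). d1 \<in> {1..D} \<and> d2 \<in> {1..D} \<and> d1 \<noteq> d2} = Sigma {1..D} (\<lambda>d. {1..D} - {d})"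
    by auto
  then have "(\<Sum>(d1, d2) \<in> {(d1, d2). d1 \<in> {1..D} \<and> d2 \<in> {1..D} \<and> d1 \<noteq> d2}.
      MI (\<lambda>x. (W d1 x, W d2 x)) S) \<le> 2 * (real D - 1) * Ent S"
    using sum_pairwise_mutual_information_le[OF assms(3) W S] assms(2) by simp
  also have "\<dots> \<le> (2 * real D - 1) * Ent S"
    using entropy_nonneg_countable[OF has_finite_entropy_measurable[OF S]] by (simp add: algebra_simps)
  finally show ?thesis .
qed


end
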